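(* Let $K=\prod_{i=1}^n[-a_i/2,a_i/2]\subset\mathbb{R}^n$ with $0<a_1\le a_2\le\dots\le a_n$, let $d^2=\sum_{i=1}^n a_i^2$, $\sigma>0$, and consider $Y=\mu+\xi$, $\mu\in K$, $\xi\sim N(0,\sigma^2\mathbb{I}_n)$. If $\sum_{i=1}^n a_i^2\le\sigma^2$, the minimax risk $\inf_{\hat\nu}\sup_{\mu\in K}\mathbb{E}\|\hat\nu(Y)-\mu\|^2$ is of order $d^2$. Otherwise it is of order $(k+2)\sigma^2\wedge d^2$, where $k\in\{0,\dots,n-1\}$ is such that $(k+1)\sigma^2\le\sum_{i=1}^{n-k}a_i^2$ but $(k+2)\sigma^2>\sum_{i=1}^{n-k-1}a_i^2$. Here "of order $r$" means bounded above and below by absolute constant multiples of $r$.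
   Context: $\|\cdot\|$ is the Euclidean norm; the infimum is over Borel measurable estimators $\hat\nu:\mathbb{R}^n\to\mathbb{R}^n$; $a\wedge b=\min(a,b)$; empty sums equal $0$. *)

theory Defs
  imports "HOL-Probability.Probability"
begin

text \<open>Vectors in R^n are represented as extensional functions nat => real on {..<n}
  (elements of the product measure space PiM {..<n} (\<lambda>_. lborel)).\<close>

definition vec_space :: "nat \<Rightarrow> (nat \<Rightarrow> real) measure" where
  "vec_space n = PiM {..<n} (\<lambda>_. lborel)"

definition gauss_noise :: "nat \<Rightarrow> real \<Rightarrow> (nat \<Rightarrow> real) measure" where
  "gauss_noise n \<sigma> = PiM {..<n} (\<lambda>_. density lborel (normal_density 0 \<sigma>))"

definition estimators :: "nat \<Rightarrow> ((nat \<Rightarrow> real) \<Rightarrow> (nat \<Rightarrow> real)) set" where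
  "estimators n = measurable (vec_space n) (vec_space n)"

text \<open>The box K = prod [-a_i/2, a_i/2] (indices shifted to 0..n-1).\<close>
definition box :: "nat \<Rightarrow> (nat \<Rightarrow> real) \<Rightarrow> (nat \<Rightarrow> real) set" where
  "box n a = PiE {..<n} (\<lambda>i. {- a i / 2 .. a i / 2})"

definition risk :: "nat \<Rightarrow> real \<Rightarrow> ((nat \<Rightarrow> real) \<Rightarrow> (nat \<Rightarrow> real)) \<Rightarrow> (nat \<Rightarrow> real) \<Rightarrow> ennreal" where
  "risk n \<sigma> \<nu> \<mu> = (\<integral>\<^sup>+ \<xi>. ennreal (\<Sum>i<n. (\<nu> (restrict (\<lambda>j. \<mu> j + \<xi> j) {..<n}) i - \<mu> i)\<^sup>2)
      \<partial>gauss_noise n \<sigma>)"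

definition minimax_risk :: "nat \<Rightarrow> real \<Rightarrow> (nat \<Rightarrow> real) \<Rightarrow> ennreal" where
  "minimax_risk n \<sigma> a = (INF \<nu>\<in>estimators n. SUP \<mu>\<in>box n a. risk n \<sigma> \<nu> \<mu>)"

end

theory Submission
  imports Defs
begin

text \<open>Lower bound (Assouad): inside \<open>K\<close> place the hypercube with vertices \<open>\<plusminus>T i\<close>, where
  \<open>T i = min (a i) \<sigma> / 2\<close>. The risk is a sum of coordinate risks, and averaging over the
  vertices while pairing the two vertices that differ only in coordinate \<open>i\<close> leaves a
  one-dimensional test between the means \<open>\<plusminus>T i\<close>. As \<open>T i \<le> \<sigma>\<close>, both Gaussian densities
  exceed \<open>1 / (24 \<sigma>)\<close> on \<open>[-\<sigma>, \<sigma>]\<close>, so the two risks add up to at least \<open>(T i)\<^sup>2 / 6\<close>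
  whatever the estimator; hence the minimax risk is at least \<open>\<Sum>i<n. (min (a i) \<sigma>)\<^sup>2 / 48\<close>.
  Upper bound: estimating the \<open>m\<close> shortest sides by the centre of \<open>K\<close> and the others by the
  observation costs at most \<open>(n - m) \<sigma>\<^sup>2 + (\<Sum>i<m. (a i)\<^sup>2) / 4\<close>. The choice \<open>m = n - k - 1\<close>
  matches the lower bound: the defining inequalities of \<open>k\<close> give
  \<open>(k + 1) \<sigma>\<^sup>2 \<le> \<Sum>i<n. (min (a i) \<sigma>)\<^sup>2\<close> and \<open>\<Sum>i<n-k-1. (a i)\<^sup>2 < (k + 2) \<sigma>\<^sup>2\<close>.\<close>

lemma exp_two_mult_sqrt_two_pi_le: "exp 2 * sqrt (2 * pi) \<le> (24::real)"
proof -
  have "exp (2::real) = exp 1 * exp 1" by (simp flip: exp_add)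
  also have "\<dots> \<le> 2.72 * 2.72" using e_less_272 by (intro mult_mono) auto
  finally have "exp (2::real) \<le> 8" by simp
  moreover have "sqrt (2 * pi) \<le> sqrt 9" using pi_less_4 by (intro real_sqrt_le_mono) simp
  ultimately show ?thesis using mult_mono[of "exp 2" 8 "sqrt (2 * pi)" 3] by simp
qed

lemma normal_density_ge_within_two_sigma:
  assumes "0 < \<sigma>" "\<bar>x\<bar> \<le> 2 * \<sigma>"
  shows "1 / (24 * \<sigma>) \<le> normal_density 0 \<sigma> x"
proof -
  have "x\<^sup>2 \<le> (2 * \<sigma>)\<^sup>2" using assms abs_le_square_iff[of x "2 * \<sigma>"] by simp
  then have "exp (-2) \<le> exp (- x\<^sup>2 / (2 * \<sigma>\<^sup>2))" using assms by (simp add: field_simps)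
  moreover have "1 / (24 * \<sigma>) \<le> exp (-2) / (sqrt (2 * pi) * \<sigma>)"
    using exp_two_mult_sqrt_two_pi_le assms by (simp add: field_simps exp_minus)
  ultimately have "1 / (24 * \<sigma>) \<le> exp (- x\<^sup>2 / (2 * \<sigma>\<^sup>2)) / (sqrt (2 * pi) * \<sigma>)"
    using assms by (smt (verit) divide_right_mono mult_pos_pos pi_gt_zero real_sqrt_gt_0_iff)
  moreover have "sqrt (2 * pi * \<sigma>\<^sup>2) = sqrt (2 * pi) * \<sigma>" using assms by (simp add: real_sqrt_mult)
  ultimately show ?thesis unfolding normal_density_def by simp
qed

lemma two_point_weighted_loss_ge:
  assumes t: "0 < t" "t \<le> \<sigma>" and y: "\<bar>y\<bar> \<le> \<sigma>"
  shows "t\<^sup>2 / (12 * \<sigma>) \<le> normal_density 0 \<sigma> (y - t) * (u - t)\<^sup>2 + normal_density 0 \<sigma> (y + t) * (u + t)\<^sup>2"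
proof -
  have "1 / (24 * \<sigma>) \<le> normal_density 0 \<sigma> (y - t)" "1 / (24 * \<sigma>) \<le> normal_density 0 \<sigma> (y + t)"
    using t y by (auto intro!: normal_density_ge_within_two_sigma)
  then have "1 / (24 * \<sigma>) * ((u - t)\<^sup>2 + (u + t)\<^sup>2)
      \<le> normal_density 0 \<sigma> (y - t) * (u - t)\<^sup>2 + normal_density 0 \<sigma> (y + t) * (u + t)\<^sup>2"
    unfolding distrib_left by (intro add_mono mult_right_mono) auto
  moreover have "t\<^sup>2 / (12 * \<sigma>) \<le> 1 / (24 * \<sigma>) * ((u - t)\<^sup>2 + (u + t)\<^sup>2)"
    using t by (simp add: field_simps power2_eq_square)
  ultimately show ?thesis by linarith
qed

lemma gaussian_two_point_risk_ge:
  fixes g :: "real \<Rightarrow> real"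
  assumes [measurable]: "g \<in> borel_measurable borel" and t: "0 < t" "t \<le> \<sigma>"
  shows "ennreal (t\<^sup>2 / 6) \<le> (\<integral>\<^sup>+x. ennreal ((g (t + x) - t)\<^sup>2) + ennreal ((g (-t + x) + t)\<^sup>2)
            \<partial>density lborel (normal_density 0 \<sigma>))"
proof -
  define A where "A y = ennreal (normal_density 0 \<sigma> (y - t) * (g y - t)\<^sup>2)" for y
  define B where "B y = ennreal (normal_density 0 \<sigma> (y + t) * (g y + t)\<^sup>2)" for y
  have [measurable]: "A \<in> borel_measurable borel" "B \<in> borel_measurable borel"
    unfolding A_def B_def by measurable
  have "ennreal (t\<^sup>2 / 6) = (\<integral>\<^sup>+y. ennreal (t\<^sup>2 / (12 * \<sigma>)) * indicator {-\<sigma>..\<sigma>} y \<partial>lborel)"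
    using t by (subst nn_integral_cmult_indicator) (auto simp: ennreal_mult[symmetric])
  also have "\<dots> \<le> (\<integral>\<^sup>+y. A y + B y \<partial>lborel)"
    using two_point_weighted_loss_ge[OF t]
    by (intro nn_integral_mono)
       (auto simp: A_def B_def indicator_def ennreal_plus[symmetric] simp del: ennreal_plus)
  also have "\<dots> = (\<integral>\<^sup>+x. A (t + 1 * x) \<partial>lborel) + (\<integral>\<^sup>+x. B (-t + 1 * x) \<partial>lborel)"
    using nn_integral_real_affine[of A 1 t] nn_integral_real_affine[of B 1 "-t"]
    by (simp add: nn_integral_add)
  also have "\<dots> = (\<integral>\<^sup>+x. ennreal (normal_density 0 \<sigma> x) *
      (ennreal ((g (t + x) - t)\<^sup>2) + ennreal ((g (-t + x) + t)\<^sup>2)) \<partial>lborel)"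
    by (subst nn_integral_add[symmetric])
       (auto intro!: nn_integral_cong simp: A_def B_def distrib_left ennreal_mult)
  finally show ?thesis by (simp add: nn_integral_density)
qed

lemma nn_integral_PiM_ge_section:
  assumes M: "\<And>j. prob_space (M j)" and I: "finite I" "i \<in> I"
    and f: "f \<in> borel_measurable (PiM I M)"
    and sections: "\<And>x. c \<le> (\<integral>\<^sup>+y. f (x(i := y)) \<partial>M i)"
  shows "c \<le> (\<integral>\<^sup>+x. f x \<partial>PiM I M)"
proof -
  interpret product_prob_space M
    by (simp add: product_prob_space_def product_prob_space_axioms_def product_sigma_finite_def
        M prob_space_imp_sigma_finite)
  interpret rest: prob_space "PiM (I - {i}) M" by (rule prob_space_PiM) (rule M)
  have I_eq: "I = insert i (I - {i})" using I by auto
  have "c = (\<integral>\<^sup>+x. c \<partial>PiM (I - {i}) M)" by (simp add: rest.emeasure_space_1)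
  also have "\<dots> \<le> (\<integral>\<^sup>+x. (\<integral>\<^sup>+y. f (x(i := y)) \<partial>M i) \<partial>PiM (I - {i}) M)"
    by (intro nn_integral_mono sections)
  also have "\<dots> = (\<integral>\<^sup>+x. f x \<partial>PiM I M)"
    using product_nn_integral_insert[of "I - {i}" i f] f I I_eq by simp
  finally show ?thesis .
qed

lemma nn_integral_PiM_component:
  assumes "\<And>j. j \<in> I \<Longrightarrow> prob_space (M j)" "i \<in> I" "f \<in> borel_measurable (M i)"
  shows "(\<integral>\<^sup>+x. f (x i) \<partial>PiM I M) = (\<integral>\<^sup>+y. f y \<partial>M i)"
proof -
  have "(\<integral>\<^sup>+x. f (x i) \<partial>PiM I M) = (\<integral>\<^sup>+y. f y \<partial>distr (PiM I M) (M i) (\<lambda>x. x i))"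
    using assms by (intro nn_integral_distr[symmetric] measurable_component_singleton) auto
  then show ?thesis using assms by (simp add: distr_PiM_component)
qed

lemma prob_space_gauss_noise: "0 < \<sigma> \<Longrightarrow> prob_space (gauss_noise n \<sigma>)"
  unfolding gauss_noise_def by (intro prob_space_PiM prob_space_normal_density)

lemma nn_integral_gauss_noise_second_moment:
  assumes "0 < \<sigma>" "i < n"
  shows "(\<integral>\<^sup>+\<xi>. ennreal ((\<xi> i)\<^sup>2) \<partial>gauss_noise n \<sigma>) = ennreal (\<sigma>\<^sup>2)"
proof -
  have "has_bochner_integral lborel (\<lambda>x. normal_density 0 \<sigma> x * x\<^sup>2) (\<sigma>\<^sup>2)"
    using normal_moment_even[of \<sigma> 0 1] assms by simp
  then have "(\<integral>\<^sup>+x. ennreal (normal_density 0 \<sigma> x * x\<^sup>2) \<partial>lborel) = ennreal (\<sigma>\<^sup>2)"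
    by (simp add: has_bochner_integral_iff nn_integral_eq_integral)
  then show ?thesis
    unfolding gauss_noise_def using assms
    by (subst nn_integral_PiM_component)
       (auto intro: prob_space_normal_density simp: nn_integral_density ennreal_mult)
qed

definition coordinate_risk ::
    "nat \<Rightarrow> real \<Rightarrow> ((nat \<Rightarrow> real) \<Rightarrow> (nat \<Rightarrow> real)) \<Rightarrow> (nat \<Rightarrow> real) \<Rightarrow> nat \<Rightarrow> ennreal" where
  "coordinate_risk n \<sigma> \<nu> \<mu> i =
     (\<integral>\<^sup>+\<xi>. ennreal ((\<nu> (restrict (\<lambda>j. \<mu> j + \<xi> j) {..<n}) i - \<mu> i)\<^sup>2) \<partial>gauss_noise n \<sigma>)"

lemma measurable_estimator_component:
  assumes "\<nu> \<in> estimators n" "i < n" "f \<in> measurable M (vec_space n)"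
  shows "(\<lambda>x. \<nu> (f x) i) \<in> borel_measurable M"
proof -
  have "(\<lambda>v. v i) \<in> borel_measurable (vec_space n)"
    unfolding vec_space_def using assms(2) by simp
  from measurable_compose[OF measurable_compose[OF assms(3) assms(1)[unfolded estimators_def]] this]
  show ?thesis .
qed

lemma measurable_coordinate_loss:
  assumes "\<nu> \<in> estimators n" "i < n"
  shows "(\<lambda>\<xi>. ennreal ((\<nu> (restrict (\<lambda>j. \<mu> j + \<xi> j) {..<n}) i - \<mu> i)\<^sup>2))
           \<in> borel_measurable (gauss_noise n \<sigma>)"
proof -
  have "(\<lambda>\<xi>. restrict (\<lambda>j. \<mu> j + \<xi> j) {..<n}) \<in> measurable (gauss_noise n \<sigma>) (vec_space n)"
    unfolding gauss_noise_def vec_space_def by measurable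
  then have [measurable]: "(\<lambda>\<xi>. \<nu> (restrict (\<lambda>j. \<mu> j + \<xi> j) {..<n}) i) \<in> borel_measurable (gauss_noise n \<sigma>)"
    by (rule measurable_estimator_component[OF assms])
  show ?thesis by measurable
qed

lemma risk_eq_sum_coordinate_risk:
  assumes "\<nu> \<in> estimators n"
  shows "risk n \<sigma> \<nu> \<mu> = (\<Sum>i<n. coordinate_risk n \<sigma> \<nu> \<mu> i)"
  unfolding risk_def coordinate_risk_def using measurable_coordinate_loss[OF assms]
  by (subst nn_integral_sum[symmetric]) (auto intro!: nn_integral_cong)

lemma coordinate_risk_two_point_ge:
  assumes \<nu>: "\<nu> \<in> estimators n" and i: "i < n" and t: "0 < t" "t \<le> \<sigma>"
  shows "ennreal (t\<^sup>2 / 6) \<le> coordinate_risk n \<sigma> \<nu> (\<mu>(i := t)) i + coordinate_risk n \<sigma> \<nu> (\<mu>(i := -t)) i"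
proof -
  define N where "N = density lborel (normal_density 0 \<sigma>)"
  define loss where
    "loss \<theta> \<xi> = ennreal ((\<nu> (restrict (\<lambda>j. (\<mu>(i := \<theta>)) j + \<xi> j) {..<n}) i - \<theta>)\<^sup>2)" for \<theta> \<xi>
  have [measurable]: "loss \<theta> \<in> borel_measurable (PiM {..<n} (\<lambda>_. N))" for \<theta>
    unfolding loss_def N_def gauss_noise_def[symmetric]
    using measurable_coordinate_loss[OF \<nu> i, of "\<mu>(i := \<theta>)"] by simp
  have risk_eq: "coordinate_risk n \<sigma> \<nu> (\<mu>(i := \<theta>)) i = (\<integral>\<^sup>+\<xi>. loss \<theta> \<xi> \<partial>PiM {..<n} (\<lambda>_. N))" for \<theta>
    by (simp add: coordinate_risk_def loss_def gauss_noise_def N_def)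
  have "ennreal (t\<^sup>2 / 6) \<le> (\<integral>\<^sup>+\<xi>. loss t \<xi> + loss (-t) \<xi> \<partial>PiM {..<n} (\<lambda>_. N))"
  proof (rule nn_integral_PiM_ge_section)
    show "prob_space N" unfolding N_def using t by (intro prob_space_normal_density) simp
  next
    fix x
    define g where "g y = \<nu> (restrict (\<lambda>j. if j = i then y else \<mu> j + x j) {..<n}) i" for y
    have "(\<lambda>y. restrict (\<lambda>j. if j = i then y else \<mu> j + x j) {..<n}) \<in> measurable borel (vec_space n)"
      unfolding vec_space_def by measurable
    from measurable_estimator_component[OF \<nu> i this]
    have [measurable]: "g \<in> borel_measurable borel" unfolding g_def .
    have "loss \<theta> (x(i := z)) = ennreal ((g (\<theta> + z) - \<theta>)\<^sup>2)" for \<theta> z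
      unfolding loss_def g_def by (intro arg_cong[where f = "\<lambda>v. ennreal ((\<nu> v i - \<theta>)\<^sup>2)"]) auto
    then show "ennreal (t\<^sup>2 / 6) \<le> (\<integral>\<^sup>+z. loss t (x(i := z)) + loss (-t) (x(i := z)) \<partial>N)"
      using gaussian_two_point_risk_ge[of g t \<sigma>] t by (simp add: N_def)
  qed (use i in auto)
  also have "\<dots> = (\<integral>\<^sup>+\<xi>. loss t \<xi> \<partial>PiM {..<n} (\<lambda>_. N)) + (\<integral>\<^sup>+\<xi>. loss (-t) \<xi> \<partial>PiM {..<n} (\<lambda>_. N))"
    by (rule nn_integral_add) auto
  finally show ?thesis unfolding risk_eq .
qed

lemma sum_hypercube_coordinate_risk_ge:
  assumes \<nu>: "\<nu> \<in> estimators n" and i: "i < n" and T: "0 < T i" "T i \<le> \<sigma>"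
  shows "of_nat (card (PiE {..<n} (\<lambda>j. {- T j, T j}))) * ennreal ((T i)\<^sup>2 / 12)
           \<le> (\<Sum>\<mu>\<in>PiE {..<n} (\<lambda>j. {- T j, T j}). coordinate_risk n \<sigma> \<nu> \<mu> i)"
proof -
  define V where "V = PiE {..<n} (\<lambda>j. {- T j, T j})"
  define F where "F \<mu> = coordinate_risk n \<sigma> \<nu> \<mu> i" for \<mu>
  define reflect where "reflect \<mu> = \<mu>(i := - \<mu> i)" for \<mu> :: "nat \<Rightarrow> real"
  have reflect_V: "reflect \<mu> \<in> V" if "\<mu> \<in> V" for \<mu>
  proof -
    have "\<mu> i \<in> {- T i, T i}" using that i by (auto simp: V_def)
    then have "- \<mu> i \<in> {- T i, T i}" by auto
    from PiE_fun_upd[OF this that[unfolded V_def]] i show ?thesis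
      by (simp add: V_def reflect_def insert_absorb)
  qed
  have reflect_reflect: "reflect (reflect \<mu>) = \<mu>" for \<mu>
    by (simp add: reflect_def)
  have sum_reflect: "(\<Sum>\<mu>\<in>V. F (reflect \<mu>)) = (\<Sum>\<mu>\<in>V. F \<mu>)"
    by (rule sum.reindex_bij_witness[of _ reflect reflect]) (auto simp: reflect_V reflect_reflect)
  have pair: "ennreal ((T i)\<^sup>2 / 6) \<le> F \<mu> + F (reflect \<mu>)" if "\<mu> \<in> V" for \<mu>
  proof -
    have "\<mu> i \<in> {- T i, T i}" using that i by (auto simp: V_def)
    then have "T i = \<mu> i \<or> T i = - \<mu> i" by auto
    then show ?thesis
    proof
      assume "T i = \<mu> i"
      then show ?thesis
        using coordinate_risk_two_point_ge[OF \<nu> i T, of \<mu>] by (simp add: F_def reflect_def)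
    next
      assume "T i = - \<mu> i"
      then show ?thesis
        using coordinate_risk_two_point_ge[OF \<nu> i T, of \<mu>] by (simp add: F_def reflect_def add.commute)
    qed
  qed
  have "2 * (of_nat (card V) * ennreal ((T i)\<^sup>2 / 12)) = (\<Sum>\<mu>\<in>V. ennreal ((T i)\<^sup>2 / 6))"
    using ennreal_mult[of 2 "(T i)\<^sup>2 / 12"] by (simp add: mult.left_commute)
  also have "\<dots> \<le> (\<Sum>\<mu>\<in>V. F \<mu> + F (reflect \<mu>))"
    by (intro sum_mono pair)
  also have "\<dots> = 2 * (\<Sum>\<mu>\<in>V. F \<mu>)"
    by (simp add: sum.distrib sum_reflect mult_2)
  finally show ?thesis
    unfolding V_def[symmetric] F_def[symmetric] by (simp add: ennreal_mult_le_mult_iff)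
qed

lemma minimax_risk_ge_hypercube:
  assumes T: "\<And>i. i < n \<Longrightarrow> 0 < T i \<and> T i \<le> \<sigma>"
    and V_box: "PiE {..<n} (\<lambda>i. {- T i, T i}) \<subseteq> box n a"
  shows "ennreal ((\<Sum>i<n. (T i)\<^sup>2) / 12) \<le> minimax_risk n \<sigma> a"
  unfolding minimax_risk_def
proof (rule INF_greatest)
  fix \<nu> assume \<nu>: "\<nu> \<in> estimators n"
  define V where "V = PiE {..<n} (\<lambda>i. {- T i, T i})"
  define c :: ennreal where "c = of_nat (card V)"
  have "finite V" "V \<noteq> {}" by (auto simp: V_def PiE_eq_empty_iff intro: finite_PiE)
  then have c: "c \<noteq> 0" "c \<noteq> \<top>" by (auto simp: c_def)
  have "c * ennreal ((\<Sum>i<n. (T i)\<^sup>2) / 12) = (\<Sum>i<n. c * ennreal ((T i)\<^sup>2 / 12))"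
    by (simp add: sum_divide_distrib sum_distrib_left flip: sum_ennreal)
  also have "\<dots> \<le> (\<Sum>i<n. \<Sum>\<mu>\<in>V. coordinate_risk n \<sigma> \<nu> \<mu> i)"
    unfolding c_def V_def using T by (intro sum_mono sum_hypercube_coordinate_risk_ge[OF \<nu>]) auto
  also have "\<dots> = (\<Sum>\<mu>\<in>V. risk n \<sigma> \<nu> \<mu>)"
    by (simp add: sum.swap[of _ "{..<n}"] risk_eq_sum_coordinate_risk[OF \<nu>])
  also have "\<dots> \<le> (\<Sum>\<mu>\<in>V. SUP \<mu>'\<in>box n a. risk n \<sigma> \<nu> \<mu>')"
    using V_box by (intro sum_mono SUP_upper) (auto simp: V_def)
  also have "\<dots> = c * (SUP \<mu>\<in>box n a. risk n \<sigma> \<nu> \<mu>)"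
    by (simp add: c_def)
  finally show "ennreal ((\<Sum>i<n. (T i)\<^sup>2) / 12) \<le> (SUP \<mu>\<in>box n a. risk n \<sigma> \<nu> \<mu>)"
    using c by (simp add: ennreal_mult_le_mult_iff)
qed

lemma minimax_risk_ge_sum_min_sq:
  assumes pos: "\<forall>i<n. 0 < a i" and \<sigma>: "0 < \<sigma>"
  shows "ennreal ((\<Sum>i<n. (min (a i) \<sigma>)\<^sup>2) / 48) \<le> minimax_risk n \<sigma> a"
proof -
  define T where "T i = min (a i) \<sigma> / 2" for i
  have "PiE {..<n} (\<lambda>i. {- T i, T i}) \<subseteq> box n a"
    unfolding box_def using pos \<sigma> by (intro PiE_mono) (auto simp: T_def)
  moreover have "\<And>i. i < n \<Longrightarrow> 0 < T i \<and> T i \<le> \<sigma>"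
    using pos \<sigma> by (auto simp: T_def)
  ultimately have "ennreal ((\<Sum>i<n. (T i)\<^sup>2) / 12) \<le> minimax_risk n \<sigma> a"
    by (intro minimax_risk_ge_hypercube)
  moreover have "(\<Sum>i<n. (T i)\<^sup>2) / 12 = (\<Sum>i<n. (min (a i) \<sigma>)\<^sup>2) / 48"
    by (simp add: T_def power_divide sum_divide_distrib[symmetric])
  ultimately show ?thesis by simp
qed

definition truncation_estimator :: "nat \<Rightarrow> nat \<Rightarrow> (nat \<Rightarrow> real) \<Rightarrow> (nat \<Rightarrow> real)" where
  "truncation_estimator n m y = restrict (\<lambda>i. if m \<le> i then y i else 0) {..<n}"

lemma truncation_estimator_in_estimators: "truncation_estimator n m \<in> estimators n"
  unfolding estimators_def vec_space_def truncation_estimator_def by measurable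

lemma coordinate_risk_truncation_estimator:
  assumes "0 < \<sigma>" "i < n"
  shows "coordinate_risk n \<sigma> (truncation_estimator n m) \<mu> i = (if m \<le> i then ennreal (\<sigma>\<^sup>2) else ennreal ((\<mu> i)\<^sup>2))"
proof (cases "m \<le> i")
  case True
  then show ?thesis
    using assms nn_integral_gauss_noise_second_moment
    by (simp add: coordinate_risk_def truncation_estimator_def)
next
  case False
  then show ?thesis
    using assms prob_space.emeasure_space_1[OF prob_space_gauss_noise]
    by (simp add: coordinate_risk_def truncation_estimator_def)
qed

lemma risk_truncation_estimator_le:
  assumes \<sigma>: "0 < \<sigma>" and m: "m \<le> n" and \<mu>: "\<mu> \<in> box n a"
  shows "risk n \<sigma> (truncation_estimator n m) \<mu> \<le> ennreal (real (n - m) * \<sigma>\<^sup>2 + (\<Sum>i<m. (a i)\<^sup>2) / 4)"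
proof -
  have bound: "\<bar>\<mu> i\<bar> \<le> a i / 2" if "i < n" for i
  proof -
    have "- a i / 2 \<le> \<mu> i \<and> \<mu> i \<le> a i / 2" using \<mu> that by (auto simp: box_def PiE_iff)
    then show ?thesis unfolding abs_le_iff by linarith
  qed
  have sq: "(\<mu> i)\<^sup>2 \<le> (a i)\<^sup>2 / 4" if "i < n" for i
    using power_mono[OF bound[OF that] abs_ge_zero, of 2] by (simp add: power_divide)
  have "risk n \<sigma> (truncation_estimator n m) \<mu> =
      (\<Sum>i<n. if m \<le> i then ennreal (\<sigma>\<^sup>2) else ennreal ((\<mu> i)\<^sup>2))"
    using \<sigma> by (simp add: risk_eq_sum_coordinate_risk truncation_estimator_in_estimators
        coordinate_risk_truncation_estimator)
  also have "\<dots> = (\<Sum>i<m. ennreal ((\<mu> i)\<^sup>2)) + (\<Sum>i\<in>{m..<n}. ennreal (\<sigma>\<^sup>2))"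
  proof -
    have "{..<n} = {..<m} \<union> {m..<n}" "{..<m} \<inter> {m..<n} = {}" using m by auto
    then show ?thesis
      using sum.union_disjoint[of "{..<m}" "{m..<n}" "\<lambda>i. if m \<le> i then ennreal (\<sigma>\<^sup>2) else ennreal ((\<mu> i)\<^sup>2)"]
      by simp
  qed
  also have "\<dots> \<le> (\<Sum>i<m. ennreal ((a i)\<^sup>2 / 4)) + (\<Sum>i\<in>{m..<n}. ennreal (\<sigma>\<^sup>2))"
    using sq m by (intro add_mono sum_mono ennreal_leI) auto
  also have "\<dots> = ennreal (real (n - m) * \<sigma>\<^sup>2 + (\<Sum>i<m. (a i)\<^sup>2) / 4)"
    by (simp add: ennreal_of_nat_eq_real_of_nat sum_divide_distrib add.commute sum_nonneg
        flip: ennreal_mult ennreal_plus)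
  finally show ?thesis .
qed

lemma minimax_risk_le_truncation:
  assumes "0 < \<sigma>" "m \<le> n"
  shows "minimax_risk n \<sigma> a \<le> ennreal (real (n - m) * \<sigma>\<^sup>2 + (\<Sum>i<m. (a i)\<^sup>2) / 4)"
  unfolding minimax_risk_def using assms
  by (intro INF_lower2[OF truncation_estimator_in_estimators[of n m]] SUP_least risk_truncation_estimator_le)

lemma sum_min_sq_eq_sum_sq:
  fixes a :: "nat \<Rightarrow> real"
  assumes "0 < \<sigma>" "(\<Sum>i<n. (a i)\<^sup>2) \<le> \<sigma>\<^sup>2"
  shows "(\<Sum>i<n. (min (a i) \<sigma>)\<^sup>2) = (\<Sum>i<n. (a i)\<^sup>2)"
proof (rule sum.cong)
  fix i assume "i \<in> {..<n}"
  then have "(a i)\<^sup>2 \<le> (\<Sum>i<n. (a i)\<^sup>2)" by (intro member_le_sum) auto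
  with assms(2) have "(a i)\<^sup>2 \<le> \<sigma>\<^sup>2" by linarith
  then have "a i \<le> \<sigma>" by (rule power2_le_imp_le) (use assms(1) in linarith)
  then show "(min (a i) \<sigma>)\<^sup>2 = (a i)\<^sup>2" by simp
qed simp

lemma sum_min_sq_ge:
  fixes a :: "nat \<Rightarrow> real"
  assumes mono: "\<forall>i j. i \<le> j \<longrightarrow> j < n \<longrightarrow> a i \<le> a j" and k: "k < n"
    and h: "(real k + 1) * \<sigma>\<^sup>2 \<le> (\<Sum>i<n-k. (a i)\<^sup>2)"
  shows "(real k + 1) * \<sigma>\<^sup>2 \<le> (\<Sum>i<n. (min (a i) \<sigma>)\<^sup>2)"
proof (cases "\<sigma> \<le> a (n-k-1)")
  case True
  have "(real k + 1) * \<sigma>\<^sup>2 = (\<Sum>i\<in>{n-k-1..<n}. (min (a i) \<sigma>)\<^sup>2)"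
  proof -
    have "min (a i) \<sigma> = \<sigma>" if "i \<in> {n-k-1..<n}" for i
      using that mono True by (smt (verit) atLeastLessThan_iff)
    then show ?thesis using k by simp
  qed
  also have "\<dots> \<le> (\<Sum>i<n. (min (a i) \<sigma>)\<^sup>2)"
    by (rule sum_mono2) auto
  finally show ?thesis .
next
  case False
  have "(\<Sum>i<n-k. (a i)\<^sup>2) = (\<Sum>i<n-k. (min (a i) \<sigma>)\<^sup>2)"
  proof (rule sum.cong)
    fix i assume "i \<in> {..<n-k}"
    then have "a i \<le> a (n-k-1)" using mono k by auto
    then show "(a i)\<^sup>2 = (min (a i) \<sigma>)\<^sup>2" using False by (simp add: min_def)
  qed simp
  also have "\<dots> \<le> (\<Sum>i<n. (min (a i) \<sigma>)\<^sup>2)"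
    by (rule sum_mono2) auto
  finally show ?thesis using h by linarith
qed

lemma minimax_risk_ge_sum_sq:
  assumes "\<forall>i<n. 0 < a i" "0 < \<sigma>" "(\<Sum>i<n. (a i)\<^sup>2) \<le> \<sigma>\<^sup>2"
  shows "ennreal (1/96 * (\<Sum>i<n. (a i)\<^sup>2)) \<le> minimax_risk n \<sigma> a"
proof -
  have "1/96 * (\<Sum>i<n. (a i)\<^sup>2) \<le> (\<Sum>i<n. (min (a i) \<sigma>)\<^sup>2) / 48"
    using sum_min_sq_eq_sum_sq[OF assms(2,3)] by (simp add: sum_nonneg)
  then show ?thesis
    using minimax_risk_ge_sum_min_sq[OF assms(1,2)] by (rule order.trans[OF ennreal_leI])
qed

lemma minimax_risk_le_sum_sq:
  assumes "0 < \<sigma>"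
  shows "minimax_risk n \<sigma> a \<le> ennreal (2 * (\<Sum>i<n. (a i)\<^sup>2))"
proof -
  have "real (n - n) * \<sigma>\<^sup>2 + (\<Sum>i<n. (a i)\<^sup>2) / 4 \<le> 2 * (\<Sum>i<n. (a i)\<^sup>2)"
    by (simp add: sum_nonneg)
  then show ?thesis
    by (rule order.trans[OF minimax_risk_le_truncation[OF assms order.refl] ennreal_leI])
qed

lemma minimax_risk_ge_min:
  fixes a :: "nat \<Rightarrow> real"
  assumes "\<forall>i<n. 0 < a i" "\<forall>i j. i \<le> j \<longrightarrow> j < n \<longrightarrow> a i \<le> a j" "0 < \<sigma>" "k < n"
    and "(real k + 1) * \<sigma>\<^sup>2 \<le> (\<Sum>i<n-k. (a i)\<^sup>2)"
  shows "ennreal (1/96 * min ((real k + 2) * \<sigma>\<^sup>2) (\<Sum>i<n. (a i)\<^sup>2)) \<le> minimax_risk n \<sigma> a"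
proof -
  have "min ((real k + 2) * \<sigma>\<^sup>2) (\<Sum>i<n. (a i)\<^sup>2) \<le> 2 * ((real k + 1) * \<sigma>\<^sup>2)"
    by (simp add: min.coboundedI1 algebra_simps)
  then have "1/96 * min ((real k + 2) * \<sigma>\<^sup>2) (\<Sum>i<n. (a i)\<^sup>2) \<le> (\<Sum>i<n. (min (a i) \<sigma>)\<^sup>2) / 48"
    using sum_min_sq_ge[OF assms(2,4,5)] by linarith
  then show ?thesis
    using minimax_risk_ge_sum_min_sq[OF assms(1,3)] by (rule order.trans[OF ennreal_leI])
qed

lemma minimax_risk_le_min:
  fixes a :: "nat \<Rightarrow> real"
  assumes \<sigma>: "0 < \<sigma>" and k: "k < n" and h: "(real k + 2) * \<sigma>\<^sup>2 > (\<Sum>i<n-k-1. (a i)\<^sup>2)"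
  shows "minimax_risk n \<sigma> a \<le> ennreal (2 * min ((real k + 2) * \<sigma>\<^sup>2) (\<Sum>i<n. (a i)\<^sup>2))"
proof (cases "(real k + 2) * \<sigma>\<^sup>2 \<le> (\<Sum>i<n. (a i)\<^sup>2)")
  case True
  have m_le: "n - k - 1 \<le> n" by simp
  have "n - (n - k - 1) = k + 1" using k by simp
  then have "real (n - (n - k - 1)) * \<sigma>\<^sup>2 + (\<Sum>i<n-k-1. (a i)\<^sup>2) / 4
      \<le> (real k + 1) * \<sigma>\<^sup>2 + (real k + 2) * \<sigma>\<^sup>2 / 4"
    using h by (simp add: add.commute)
  also have "\<dots> = ((real k + 1) + (real k + 2) / 4) * \<sigma>\<^sup>2"
    by (simp add: algebra_simps)
  also have "\<dots> \<le> 2 * (real k + 2) * \<sigma>\<^sup>2"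
    by (intro mult_right_mono) auto
  also have "\<dots> = 2 * min ((real k + 2) * \<sigma>\<^sup>2) (\<Sum>i<n. (a i)\<^sup>2)"
    using True by (simp add: min_absorb1)
  finally have "real (n - (n - k - 1)) * \<sigma>\<^sup>2 + (\<Sum>i<n-k-1. (a i)\<^sup>2) / 4
      \<le> 2 * min ((real k + 2) * \<sigma>\<^sup>2) (\<Sum>i<n. (a i)\<^sup>2)" .
  then show ?thesis
    by (rule order.trans[OF minimax_risk_le_truncation[OF \<sigma> m_le] ennreal_leI])
next
  case False
  then show ?thesis using minimax_risk_le_sum_sq[OF \<sigma>, of n a] by (simp add: min_absorb2)
qed

theorem mainTheorem9:
  "\<exists>c C :: real. c > 0 \<and> C > 0 \<and>
     (\<forall>(n::nat) (a::nat \<Rightarrow> real) (\<sigma>::real).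
        (\<forall>i<n. 0 < a i) \<longrightarrow> (\<forall>i j. i \<le> j \<longrightarrow> j < n \<longrightarrow> a i \<le> a j) \<longrightarrow> \<sigma> > 0 \<longrightarrow>
        ((\<Sum>i<n. (a i)\<^sup>2) \<le> \<sigma>\<^sup>2 \<longrightarrow>
            ennreal (c * (\<Sum>i<n. (a i)\<^sup>2)) \<le> minimax_risk n \<sigma> a \<and>
            minimax_risk n \<sigma> a \<le> ennreal (C * (\<Sum>i<n. (a i)\<^sup>2))) \<and>
        ((\<Sum>i<n. (a i)\<^sup>2) > \<sigma>\<^sup>2 \<longrightarrow>
          (\<forall>k<n. (real k + 1) * \<sigma>\<^sup>2 \<le> (\<Sum>i<n-k. (a i)\<^sup>2) \<longrightarrow>
                 (real k + 2) * \<sigma>\<^sup>2 > (\<Sum>i<n-k-1. (a i)\<^sup>2) \<longrightarrow>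
            ennreal (c * min ((real k + 2) * \<sigma>\<^sup>2) (\<Sum>i<n. (a i)\<^sup>2)) \<le> minimax_risk n \<sigma> a \<and>
            minimax_risk n \<sigma> a \<le> ennreal (C * min ((real k + 2) * \<sigma>\<^sup>2) (\<Sum>i<n. (a i)\<^sup>2)))))"
proof (rule exI[of _ "1/96"], rule exI[of _ 2], intro conjI allI impI)
  fix n :: nat and a :: "nat \<Rightarrow> real" and \<sigma> :: real and k :: nat
  assume pos: "\<forall>i<n. 0 < a i" and mono: "\<forall>i j. i \<le> j \<longrightarrow> j < n \<longrightarrow> a i \<le> a j" and \<sigma>: "0 < \<sigma>"
  show "ennreal (1/96 * (\<Sum>i<n. (a i)\<^sup>2)) \<le> minimax_risk n \<sigma> a"
    if "(\<Sum>i<n. (a i)\<^sup>2) \<le> \<sigma>\<^sup>2"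
    using minimax_risk_ge_sum_sq[OF pos \<sigma> that] .
  show "minimax_risk n \<sigma> a \<le> ennreal (2 * (\<Sum>i<n. (a i)\<^sup>2))"
    using minimax_risk_le_sum_sq[OF \<sigma>] .
  show "ennreal (1/96 * min ((real k + 2) * \<sigma>\<^sup>2) (\<Sum>i<n. (a i)\<^sup>2)) \<le> minimax_risk n \<sigma> a"
    if "k < n" "(real k + 1) * \<sigma>\<^sup>2 \<le> (\<Sum>i<n-k. (a i)\<^sup>2)"
    using minimax_risk_ge_min[OF pos mono \<sigma> that] .
  show "minimax_risk n \<sigma> a \<le> ennreal (2 * min ((real k + 2) * \<sigma>\<^sup>2) (\<Sum>i<n. (a i)\<^sup>2))"
    if "k < n" "(real k + 2) * \<sigma>\<^sup>2 > (\<Sum>i<n-k-1. (a i)\<^sup>2)"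
    using minimax_risk_le_min[OF \<sigma> that] .
qed simp_all

end
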